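(* Let $\boldsymbol\Sigma$ be a positive definite $n\times n$ covariance matrix associated with locations $s_1,\dots,s_n$ (in a fixed order). For $m\ge0$, let $\mathbf Q(m)=(\mathbf I-\mathbf B(m))^\top\mathbf F(m)^{-1}(\mathbf I-\mathbf B(m))$ be the NNGP precision matrix derived from $\boldsymbol\Sigma$ with neighbor sets $N_m(i)$ of size $\min(m,i-1)$ consisting of nearest previous locations, nested in $m$ (i.e. $N_m(i)\subseteq N_{m+1}(i)$). Let $\mathbf E(m)=(\boldsymbol\Sigma^{1/2})^\top\mathbf Q(m)\boldsymbol\Sigma^{1/2}$ and $\mathrm{KLD}(\mathbf I,\mathbf E(m))=\operatorname{tr}(\mathbf E(m))-\log|\mathbf E(m)|$. Then $\mathrm{KLD}(\mathbf I,\mathbf E(m))$ decreases monotonically with $m$.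
   Context: $\boldsymbol\Sigma^{1/2}(\boldsymbol\Sigma^{1/2})^\top=\boldsymbol\Sigma$. NNGP construction with neighbor sets $N(i)\subseteq\{1,\dots,i-1\}$: $\mathbf B$ strictly lower triangular with $\mathbf B_{i,N(i)}=\boldsymbol\Sigma(i,N(i))\boldsymbol\Sigma(N(i),N(i))^{-1}$, zero elsewhere; $\mathbf F$ diagonal with $\mathbf F_{ii}=\boldsymbol\Sigma_{ii}-\boldsymbol\Sigma(i,N(i))\boldsymbol\Sigma(N(i),N(i))^{-1}\boldsymbol\Sigma(N(i),i)$ (with $\mathbf F_{ii}=\boldsymbol\Sigma_{ii}$ if $N(i)=\emptyset$). $m=0$ gives $\mathbf Q(0)$ diagonal. *)

theory Defs
  imports Complex_Main
    "Jordan_Normal_Form.Gauss_Jordan_Elimination"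
    "Jordan_Normal_Form.DL_Submatrix"
    "Jordan_Normal_Form.Determinant"
begin

text \<open>Matrices are Jordan_Normal_Form matrices over the reals; indices are 0-based,
  so location s_i of the paper is s (i-1) here and N(i) is a subset of {0..<i}.\<close>

definition mat_trace :: "real mat \<Rightarrow> real" where
  "mat_trace A = (\<Sum>i<dim_row A. A $$ (i, i))"

definition pos_def_mat :: "nat \<Rightarrow> real mat \<Rightarrow> bool" where
  "pos_def_mat n S \<longleftrightarrow> S \<in> carrier_mat n n \<and> transpose_mat S = S \<and>
     (\<forall>v \<in> carrier_vec n. v \<noteq> 0\<^sub>v n \<longrightarrow> v \<bullet> (S *\<^sub>v v) > 0)"

definition minv :: "real mat \<Rightarrow> real mat" where
  "minv A = the (mat_inverse A)"

text \<open>Kriging weights Sigma(i,N(i)) Sigma(N(i),N(i))^{-1}, a 1 x |N(i)| matrix whose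
  columns follow the increasing order of N(i).\<close>
definition nngp_w :: "real mat \<Rightarrow> nat set \<Rightarrow> nat \<Rightarrow> real mat" where
  "nngp_w S Ni i = submatrix S {i} Ni * minv (submatrix S Ni Ni)"

definition nngp_B :: "nat \<Rightarrow> real mat \<Rightarrow> (nat \<Rightarrow> nat set) \<Rightarrow> real mat" where
  "nngp_B n S N = mat n n (\<lambda>(i, j).
     if j \<in> N i then nngp_w S (N i) i $$ (0, card {a \<in> N i. a < j}) else 0)"

definition nngp_F :: "nat \<Rightarrow> real mat \<Rightarrow> (nat \<Rightarrow> nat set) \<Rightarrow> real mat" where
  "nngp_F n S N = mat n n (\<lambda>(i, j).
     if i = j then
       (if N i = {} then S $$ (i, i)
        else S $$ (i, i) - (nngp_w S (N i) i * submatrix S (N i) {i}) $$ (0, 0))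
     else 0)"

definition nngp_Q :: "nat \<Rightarrow> real mat \<Rightarrow> (nat \<Rightarrow> nat set) \<Rightarrow> real mat" where
  "nngp_Q n S N = transpose_mat (1\<^sub>m n - nngp_B n S N) * minv (nngp_F n S N)
                    * (1\<^sub>m n - nngp_B n S N)"

definition KLD_I :: "real mat \<Rightarrow> real" where
  "KLD_I E = mat_trace E - ln (det E)"

definition nearest_prev_neighbors ::
    "(nat \<Rightarrow> 'a::metric_space) \<Rightarrow> nat \<Rightarrow> nat \<Rightarrow> nat set \<Rightarrow> bool" where
  "nearest_prev_neighbors s m i Ni \<longleftrightarrow>
     Ni \<subseteq> {0..<i} \<and> card Ni = min m i \<and>
     (\<forall>j \<in> Ni. \<forall>k \<in> {0..<i} - Ni. dist (s i) (s j) \<le> dist (s i) (s k))"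

end

theory Submission
  imports Defs
begin

(* Write A = I - B and D = F^-1, so that Q = A' D A. Row i of A is the coefficient vector a_i of
   the error of kriging the i-th variable from its neighbours N(i); the normal equations make a_i
   S-orthogonal to every vector supported on N(i), whence a_i' S a_i = F_ii. Cycling the trace,
   tr E = tr (A S A' D) = sum_i a_i' S a_i / F_ii = n, and since A is unit lower triangular,
   det E = det S / prod_i F_ii. Hence KLD(I, E(m)) = n - log det S + sum_i log F_ii(m). By
   Pythagoras F_ii is the minimum of x' S x over x = e_i + (vector supported on N(i)), so it can
   only decrease when N(i) grows. *)

lemma pick_singleton: "pick {i} 0 = i"
  by (simp add: Least_equality)

lemma bij_betw_pick:
  assumes "finite N"
  shows "bij_betw (pick N) {..<card N} N"
proof (rule bij_betw_byWitness[where f' = "\<lambda>j. card {a \<in> N. a < j}"])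
  show "\<forall>t\<in>{..<card N}. card {a \<in> N. a < pick N t} = t" by (simp add: card_pick_le)
  show "\<forall>j\<in>N. pick N (card {a \<in> N. a < j}) = j" by (simp add: pick_card_in_set)
  show "pick N ` {..<card N} \<subseteq> N" by (auto intro: pick_in_set_le)
  show "(\<lambda>j. card {a \<in> N. a < j}) ` N \<subseteq> {..<card N}"
    using assms by (auto intro!: psubset_card_mono)
qed

lemma sum_pick: "finite N \<Longrightarrow> (\<Sum>j\<in>N. f j) = (\<Sum>t<card N. f (pick N t))"
  using sum.reindex_bij_betw[OF bij_betw_pick, of N f] by simp

lemma submatrix_carrier:
  assumes "A \<in> carrier_mat n m" "I \<subseteq> {..<n}" "J \<subseteq> {..<m}"
  shows "submatrix A I J \<in> carrier_mat (card I) (card J)"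
proof -
  have "{i. i < dim_row A \<and> i \<in> I} = I" "{j. j < dim_col A \<and> j \<in> J} = J"
    using assms by auto
  then show ?thesis by (intro carrier_matI) (simp_all only: dim_submatrix)
qed

lemma submatrix_pick_index:
  assumes "A \<in> carrier_mat n m" "I \<subseteq> {..<n}" "J \<subseteq> {..<m}" "r < card I" "t < card J"
  shows "submatrix A I J $$ (r, t) = A $$ (pick I r, pick J t)"
proof -
  have "{i. i < dim_row A \<and> i \<in> I} = I" "{j. j < dim_col A \<and> j \<in> J} = J"
    using assms(1-3) by auto
  then show ?thesis by (intro submatrix_index) (simp_all add: assms(4,5))
qed

definition quad_form :: "nat \<Rightarrow> real mat \<Rightarrow> (nat \<Rightarrow> real) \<Rightarrow> real" where
  "quad_form n S x = (\<Sum>j<n. x j * (\<Sum>k<n. S $$ (j, k) * x k))"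

lemma quad_form_cong: "(\<And>j. j < n \<Longrightarrow> x j = y j) \<Longrightarrow> quad_form n S x = quad_form n S y"
  unfolding quad_form_def by (intro sum.cong) auto

lemma scalar_prod_mult_mat_vec_quad_form:
  assumes "S \<in> carrier_mat n n" "v \<in> carrier_vec n"
  shows "v \<bullet> (S *\<^sub>v v) = quad_form n S (\<lambda>j. v $ j)"
  using assms by (simp add: quad_form_def scalar_prod_def atLeast0LessThan)

lemma quad_form_supported:
  assumes N: "N \<subseteq> {..<n}" and x: "\<And>j. j \<notin> N \<Longrightarrow> x j = 0"
  shows "quad_form n S x =
    (\<Sum>r<card N. x (pick N r) * (\<Sum>t<card N. S $$ (pick N r, pick N t) * x (pick N t)))"
proof -
  have fin: "finite N" using N finite_subset by blast
  have "(\<Sum>k<n. S $$ (j, k) * x k) = (\<Sum>k\<in>N. S $$ (j, k) * x k)" for j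
    using N x by (intro sum.mono_neutral_right) auto
  then have "quad_form n S x = (\<Sum>j<n. x j * (\<Sum>k\<in>N. S $$ (j, k) * x k))"
    by (simp add: quad_form_def)
  also have "\<dots> = (\<Sum>j\<in>N. x j * (\<Sum>k\<in>N. S $$ (j, k) * x k))"
    using N x by (intro sum.mono_neutral_right) auto
  finally show ?thesis by (simp add: sum_pick[OF fin])
qed

lemma quad_form_add_orthogonal:
  assumes sym: "\<And>j k. j < n \<Longrightarrow> k < n \<Longrightarrow> S $$ (k, j) = S $$ (j, k)"
    and orth: "(\<Sum>j<n. y j * (\<Sum>k<n. S $$ (j, k) * x k)) = 0"
  shows "quad_form n S (\<lambda>j. x j + y j) = quad_form n S x + quad_form n S y"
proof -
  have "(\<Sum>j<n. x j * (\<Sum>k<n. S $$ (j, k) * y k)) = (\<Sum>j<n. \<Sum>k<n. y k * S $$ (k, j) * x j)"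
    by (auto simp: sum_distrib_left sym mult_ac intro!: sum.cong)
  also have "\<dots> = (\<Sum>j<n. y j * (\<Sum>k<n. S $$ (j, k) * x k))"
    by (subst sum.swap) (simp add: sum_distrib_left mult.assoc)
  finally have cross: "(\<Sum>j<n. x j * (\<Sum>k<n. S $$ (j, k) * y k)) = 0" using orth by simp
  have "quad_form n S (\<lambda>j. x j + y j) = quad_form n S x + quad_form n S y
      + (\<Sum>j<n. x j * (\<Sum>k<n. S $$ (j, k) * y k)) + (\<Sum>j<n. y j * (\<Sum>k<n. S $$ (j, k) * x k))"
    unfolding quad_form_def by (simp add: distrib_left distrib_right sum.distrib)
  then show ?thesis using cross orth by simp
qed

lemma pos_def_mat_sym:
  assumes "pos_def_mat n S" "j < n" "k < n"
  shows "S $$ (k, j) = S $$ (j, k)"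
proof -
  have "S \<in> carrier_mat n n" "transpose_mat S = S" using assms(1) by (auto simp: pos_def_mat_def)
  then show ?thesis using assms(2,3) by (metis carrier_matD index_transpose_mat(1))
qed

lemma pos_def_quad_form_pos:
  assumes pd: "pos_def_mat n S" and "j < n" "x j \<noteq> 0"
  shows "quad_form n S x > 0"
proof -
  have S: "S \<in> carrier_mat n n" using pd by (simp add: pos_def_mat_def)
  have "vec n x \<noteq> 0\<^sub>v n" using assms(2,3) by (metis index_vec index_zero_vec(1))
  then have "vec n x \<bullet> (S *\<^sub>v vec n x) > 0" using pd by (auto simp: pos_def_mat_def)
  moreover have "quad_form n S (\<lambda>j. vec n x $ j) = quad_form n S x" by (rule quad_form_cong) simp
  ultimately show ?thesis using scalar_prod_mult_mat_vec_quad_form[OF S, of "vec n x"] by simp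
qed

lemma pos_def_quad_form_nonneg:
  assumes "pos_def_mat n S"
  shows "quad_form n S x \<ge> 0"
proof (cases "\<exists>j<n. x j \<noteq> 0")
  case True
  then show ?thesis using pos_def_quad_form_pos[OF assms] by (meson less_imp_le)
next
  case False
  then show ?thesis by (simp add: quad_form_def)
qed

lemma pos_def_det_nonzero:
  assumes pd: "pos_def_mat n S"
  shows "det S \<noteq> 0"
proof
  assume "det S = 0"
  moreover have "S \<in> carrier_mat n n" using pd by (simp add: pos_def_mat_def)
  ultimately obtain v where "v \<in> carrier_vec n" "v \<noteq> 0\<^sub>v n" "S *\<^sub>v v = 0\<^sub>v n"
    using det_0_iff_vec_prod_zero_field by blast
  then show False using pd by (auto simp: pos_def_mat_def)
qed

lemma pos_def_principal_submatrix:
  assumes pd: "pos_def_mat n S" and N: "N \<subseteq> {..<n}"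
  shows "pos_def_mat (card N) (submatrix S N N)"
proof -
  have S: "S \<in> carrier_mat n n" using pd by (simp add: pos_def_mat_def)
  note M = submatrix_carrier[OF S N N]
  have M_index: "submatrix S N N $$ (r, t) = S $$ (pick N r, pick N t)"
    if "r < card N" "t < card N" for r t
    using submatrix_pick_index[OF S N N that] .
  have pick_less: "pick N r < n" if "r < card N" for r
    using pick_in_set_le[OF that] N by auto
  have "transpose_mat (submatrix S N N) = submatrix S N N"
    using M by (intro eq_matI) (auto simp: M_index pos_def_mat_sym[OF pd] pick_less)
  moreover have "v \<bullet> (submatrix S N N *\<^sub>v v) > 0"
    if v: "v \<in> carrier_vec (card N)" "v \<noteq> 0\<^sub>v (card N)" for v
  proof -
    define x where "x j = (if j \<in> N then v $ card {a \<in> N. a < j} else 0)" for j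
    have x_pick: "x (pick N r) = v $ r" if "r < card N" for r
      using that by (simp add: x_def pick_in_set_le card_pick_le)
    obtain r where r: "r < card N" "v $ r \<noteq> 0"
      using v by (metis carrier_vecD eq_vecI index_zero_vec)
    have "v \<bullet> (submatrix S N N *\<^sub>v v) = quad_form (card N) (submatrix S N N) (\<lambda>t. v $ t)"
      by (rule scalar_prod_mult_mat_vec_quad_form[OF M v(1)])
    also have "\<dots> =
        (\<Sum>r<card N. x (pick N r) * (\<Sum>t<card N. S $$ (pick N r, pick N t) * x (pick N t)))"
      by (auto simp: x_pick M_index quad_form_def intro!: sum.cong)
    also have "\<dots> = quad_form n S x"
      by (rule quad_form_supported[OF N, symmetric]) (simp add: x_def)
    also have "\<dots> > 0"
      using pos_def_quad_form_pos[OF pd pick_less[OF r(1)]] x_pick r by simp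
    finally show ?thesis .
  qed
  ultimately show ?thesis using M by (simp add: pos_def_mat_def)
qed

lemma minv_inverse:
  assumes A: "A \<in> carrier_mat k k" and "det A \<noteq> 0"
  shows "minv A \<in> carrier_mat k k" "A * minv A = 1\<^sub>m k" "minv A * A = 1\<^sub>m k"
proof -
  obtain B where "mat_inverse A = Some B"
    using mat_inverse(1)[OF A, where b = "()"] det_non_zero_imp_unit[OF A assms(2), where b = "()"]
    by (cases "mat_inverse A") auto
  then show "minv A \<in> carrier_mat k k" "A * minv A = 1\<^sub>m k" "minv A * A = 1\<^sub>m k"
    using mat_inverse(2)[OF A] by (auto simp: minv_def)
qed

lemma minv_eqI:
  assumes A: "A \<in> carrier_mat k k" and B: "B \<in> carrier_mat k k" and AB: "A * B = 1\<^sub>m k"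
  shows "minv A = B"
proof -
  have "det A * det B = 1" using det_mult[OF A B] AB by simp
  then have "det A \<noteq> 0" by auto
  note inv = minv_inverse[OF A this]
  have "minv A = minv A * (A * B)" using AB inv(1) by simp
  also have "\<dots> = (minv A * A) * B" using assoc_mult_mat[OF inv(1) A B] by simp
  also have "\<dots> = B" using inv(3) B by simp
  finally show ?thesis .
qed

definition kriging_coeff :: "real mat \<Rightarrow> nat set \<Rightarrow> nat \<Rightarrow> nat \<Rightarrow> real" where
  "kriging_coeff S N i j = (if j \<in> N then nngp_w S N i $$ (0, card {a \<in> N. a < j}) else 0)"

definition kriging_residual :: "real mat \<Rightarrow> nat set \<Rightarrow> nat \<Rightarrow> nat \<Rightarrow> real" where
  "kriging_residual S N i j = (if j = i then 1 else 0) - kriging_coeff S N i j"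

definition residual_var :: "real mat \<Rightarrow> nat set \<Rightarrow> nat \<Rightarrow> real" where
  "residual_var S N i = (if N = {} then S $$ (i, i)
     else S $$ (i, i) - (nngp_w S N i * submatrix S N {i}) $$ (0, 0))"

lemma nngp_w_carrier:
  assumes pd: "pos_def_mat n S" and N: "N \<subseteq> {..<n}" and i: "i < n"
  shows "nngp_w S N i \<in> carrier_mat 1 (card N)"
proof -
  have S: "S \<in> carrier_mat n n" using pd by (simp add: pos_def_mat_def)
  have "det (submatrix S N N) \<noteq> 0"
    using pos_def_det_nonzero[OF pos_def_principal_submatrix[OF pd N]] .
  then show ?thesis
    using minv_inverse(1)[OF submatrix_carrier[OF S N N]] submatrix_carrier[OF S, of "{i}" N] i N
    by (simp add: nngp_w_def)
qed

lemma sum_kriging_coeff: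
  assumes N: "N \<subseteq> {..<n}"
  shows "(\<Sum>k<n. f k * kriging_coeff S N i k) = (\<Sum>t<card N. f (pick N t) * nngp_w S N i $$ (0, t))"
proof -
  have fin: "finite N" using N finite_subset by blast
  have "(\<Sum>k<n. f k * kriging_coeff S N i k) = (\<Sum>k\<in>N. f k * kriging_coeff S N i k)"
    using N by (intro sum.mono_neutral_right) (auto simp: kriging_coeff_def)
  then show ?thesis
    by (simp add: sum_pick[OF fin] kriging_coeff_def pick_in_set_le card_pick_le)
qed

lemma kriging_normal_equation:
  assumes pd: "pos_def_mat n S" and N: "N \<subseteq> {..<n}" and i: "i < n" and j: "j \<in> N"
  shows "(\<Sum>k<n. S $$ (j, k) * kriging_coeff S N i k) = S $$ (j, i)"
proof -
  have S: "S \<in> carrier_mat n n" using pd by (simp add: pos_def_mat_def)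
  have iN: "{i} \<subseteq> {..<n}" using i by simp
  define M where "M = submatrix S N N"
  define w where "w = nngp_w S N i"
  have M: "M \<in> carrier_mat (card N) (card N)" unfolding M_def by (rule submatrix_carrier[OF S N N])
  have w: "w \<in> carrier_mat 1 (card N)" unfolding w_def by (rule nngp_w_carrier[OF pd N i])
  have "det M \<noteq> 0" unfolding M_def
    using pos_def_det_nonzero[OF pos_def_principal_submatrix[OF pd N]] .
  note M_inv = minv_inverse[OF M this]
  have wM: "w * M = submatrix S {i} N"
    using assoc_mult_mat[OF submatrix_carrier[OF S iN N] M_inv(1) M] M_inv(3)
      submatrix_carrier[OF S iN N] by (simp add: w_def nngp_w_def M_def)
  define r where "r = card {a \<in> N. a < j}"
  have fin: "finite N" using N finite_subset by blast
  have r: "r < card N" "pick N r = j"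
    using j fin by (auto simp: r_def pick_card_in_set intro!: psubset_card_mono)
  have j_less: "j < n" using j N by auto
  have "(\<Sum>k<n. S $$ (j, k) * kriging_coeff S N i k) = (\<Sum>t<card N. S $$ (j, pick N t) * w $$ (0, t))"
    unfolding w_def by (rule sum_kriging_coeff[OF N])
  also have "\<dots> = (\<Sum>t<card N. w $$ (0, t) * M $$ (t, r))"
  proof (rule sum.cong[OF refl])
    fix t assume t: "t \<in> {..<card N}"
    then have "pick N t < n" using pick_in_set_le N by auto
    then show "S $$ (j, pick N t) * w $$ (0, t) = w $$ (0, t) * M $$ (t, r)"
      using r t by (simp add: M_def submatrix_pick_index[OF S N N] pos_def_mat_sym[OF pd j_less])
  qed
  also have "\<dots> = (w * M) $$ (0, r)"
    using w M r(1) by (simp add: scalar_prod_def atLeast0LessThan)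
  also have "\<dots> = S $$ (j, i)"
    using wM r submatrix_pick_index[OF S iN N, of 0 r, unfolded pick_singleton]
      pos_def_mat_sym[OF pd i j_less] by simp
  finally show ?thesis .
qed

lemma residual_var_eq:
  assumes pd: "pos_def_mat n S" and N: "N \<subseteq> {..<n}" and i: "i < n"
  shows "residual_var S N i = S $$ (i, i) - (\<Sum>k<n. S $$ (i, k) * kriging_coeff S N i k)"
proof (cases "N = {}")
  case True
  then show ?thesis by (simp add: residual_var_def kriging_coeff_def)
next
  case False
  have S: "S \<in> carrier_mat n n" using pd by (simp add: pos_def_mat_def)
  have iN: "{i} \<subseteq> {..<n}" using i by simp
  note w = nngp_w_carrier[OF pd N i]
  have "(nngp_w S N i * submatrix S N {i}) $$ (0, 0)
      = (\<Sum>t<card N. nngp_w S N i $$ (0, t) * submatrix S N {i} $$ (t, 0))"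
    using w submatrix_carrier[OF S N iN] by (simp add: scalar_prod_def atLeast0LessThan)
  also have "\<dots> = (\<Sum>t<card N. S $$ (i, pick N t) * nngp_w S N i $$ (0, t))"
  proof (rule sum.cong[OF refl])
    fix t assume t: "t \<in> {..<card N}"
    then have "pick N t < n" using pick_in_set_le N by auto
    then show "nngp_w S N i $$ (0, t) * submatrix S N {i} $$ (t, 0) = S $$ (i, pick N t) * nngp_w S N i $$ (0, t)"
      using t submatrix_pick_index[OF S N iN, of t 0, unfolded pick_singleton]
        pos_def_mat_sym[OF pd i] by simp
  qed
  also have "\<dots> = (\<Sum>k<n. S $$ (i, k) * kriging_coeff S N i k)"
    by (rule sum_kriging_coeff[OF N, symmetric])
  finally show ?thesis using False by (simp add: residual_var_def)
qed

lemma sum_kriging_residual: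
  assumes "i < n"
  shows "(\<Sum>k<n. S $$ (j, k) * kriging_residual S N i k)
    = S $$ (j, i) - (\<Sum>k<n. S $$ (j, k) * kriging_coeff S N i k)"
proof -
  have "(\<Sum>k<n. S $$ (j, k) * (if k = i then 1 else 0)) = (\<Sum>k<n. if k = i then S $$ (j, k) else 0)"
    by (rule sum.cong) auto
  then show ?thesis
    using assms by (simp add: kriging_residual_def right_diff_distrib sum_subtractf)
qed

lemma kriging_residual_orthogonal:
  assumes pd: "pos_def_mat n S" and N: "N \<subseteq> {..<i}" and i: "i < n" and j: "j \<in> N"
  shows "(\<Sum>k<n. S $$ (j, k) * kriging_residual S N i k) = 0"
  using sum_kriging_residual[OF i] kriging_normal_equation[OF pd _ i j] N i by force

lemma quad_form_kriging_residual:
  assumes pd: "pos_def_mat n S" and N: "N \<subseteq> {..<i}" and i: "i < n"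
  shows "quad_form n S (kriging_residual S N i) = residual_var S N i"
proof -
  let ?g = "\<lambda>j. \<Sum>k<n. S $$ (j, k) * kriging_residual S N i k"
  have "quad_form n S (kriging_residual S N i)
      = (\<Sum>j<n. (if j = i then 1 else 0) * ?g j) - (\<Sum>j<n. kriging_coeff S N i j * ?g j)"
    by (simp add: quad_form_def kriging_residual_def left_diff_distrib sum_subtractf)
  also have "(\<Sum>j<n. kriging_coeff S N i j * ?g j) = 0"
    by (rule sum.neutral) (simp add: kriging_coeff_def kriging_residual_orthogonal[OF pd N i])
  also have "(\<Sum>j<n. (if j = i then 1 else 0) * ?g j) = (\<Sum>j<n. if j = i then ?g j else 0)"
    by (rule sum.cong) auto
  also have "\<dots> = ?g i" using i by simp
  also have "?g i = residual_var S N i"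
  proof -
    have "N \<subseteq> {..<n}" using N i by auto
    then show ?thesis using i by (simp add: sum_kriging_residual residual_var_eq[OF pd _ i])
  qed
  finally show ?thesis by simp
qed

lemma residual_var_le_quad_form:
  assumes pd: "pos_def_mat n S" and N: "N \<subseteq> {..<i}" and i: "i < n"
    and d: "\<And>j. j \<notin> N \<Longrightarrow> d j = 0"
  shows "residual_var S N i \<le> quad_form n S (\<lambda>j. kriging_residual S N i j + d j)"
proof -
  have "(\<Sum>j<n. d j * (\<Sum>k<n. S $$ (j, k) * kriging_residual S N i k)) = 0"
    by (rule sum.neutral) (metis d kriging_residual_orthogonal[OF pd N i] mult_zero_left mult_zero_right)
  then have "quad_form n S (\<lambda>j. kriging_residual S N i j + d j) = residual_var S N i + quad_form n S d"
    using quad_form_add_orthogonal[OF pos_def_mat_sym[OF pd]] quad_form_kriging_residual[OF pd N i]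
    by simp
  then show ?thesis using pos_def_quad_form_nonneg[OF pd, of d] by simp
qed

lemma residual_var_antimono:
  assumes pd: "pos_def_mat n S" and "N \<subseteq> N'" "N' \<subseteq> {..<i}" "i < n"
  shows "residual_var S N' i \<le> residual_var S N i"
proof -
  have "residual_var S N' i \<le> quad_form n S
      (\<lambda>j. kriging_residual S N' i j + (kriging_coeff S N' i j - kriging_coeff S N i j))"
    by (rule residual_var_le_quad_form[OF pd]) (use assms in \<open>auto simp: kriging_coeff_def\<close>)
  also have "(\<lambda>j. kriging_residual S N' i j + (kriging_coeff S N' i j - kriging_coeff S N i j))
      = kriging_residual S N i"
    by (auto simp: kriging_residual_def)
  also have "quad_form n S (kriging_residual S N i) = residual_var S N i"
    by (rule quad_form_kriging_residual[OF pd]) (use assms in auto)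
  finally show ?thesis .
qed

lemma residual_var_pos:
  assumes pd: "pos_def_mat n S" and N: "N \<subseteq> {..<i}" and i: "i < n"
  shows "residual_var S N i > 0"
proof -
  have "kriging_residual S N i i \<noteq> 0" using N by (auto simp: kriging_residual_def kriging_coeff_def)
  from pos_def_quad_form_pos[where x = "kriging_residual S N i", OF pd i this] show ?thesis
    using quad_form_kriging_residual[OF pd N i] by simp
qed

lemma mat_trace_mult_comm:
  assumes "A \<in> carrier_mat n m" "B \<in> carrier_mat m n"
  shows "mat_trace (A * B) = mat_trace (B * A)"
proof -
  have "mat_trace (A * B) = (\<Sum>i<n. \<Sum>k<m. A $$ (i, k) * B $$ (k, i))"
    using assms by (simp add: mat_trace_def scalar_prod_def atLeast0LessThan)
  also have "\<dots> = (\<Sum>k<m. \<Sum>i<n. B $$ (k, i) * A $$ (i, k))"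
    by (subst sum.swap) (simp add: mult.commute)
  also have "\<dots> = mat_trace (B * A)"
    using assms by (simp add: mat_trace_def scalar_prod_def atLeast0LessThan)
  finally show ?thesis .
qed

lemma index_mult_transpose_quad_form:
  assumes "A \<in> carrier_mat n n" "S \<in> carrier_mat n n" "p < n"
  shows "(A * S * transpose_mat A) $$ (p, p) = quad_form n S (\<lambda>j. A $$ (p, j))"
  using assms by (simp add: quad_form_def scalar_prod_def atLeast0LessThan)

lemma det_mat_diag: "det (mat_diag n f) = (\<Prod>i<n. f i)"
proof -
  have "det (mat_diag n f) = prod_list (diag_mat (mat_diag n f))"
    by (rule det_upper_triangular[of _ n]) (auto simp: upper_triangular_def mat_diag_def)
  then show ?thesis by (simp add: prod_list_diag_prod mat_diag_def atLeast0LessThan)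
qed

lemma one_minus_nngp_B_carrier: "1\<^sub>m n - nngp_B n S N \<in> carrier_mat n n"
  by (rule minus_carrier_mat) (simp add: nngp_B_def)

lemma one_minus_nngp_B_index:
  "i < n \<Longrightarrow> j < n \<Longrightarrow> (1\<^sub>m n - nngp_B n S N) $$ (i, j) = kriging_residual S (N i) i j"
  by (simp add: nngp_B_def kriging_residual_def kriging_coeff_def)

lemma det_one_minus_nngp_B:
  assumes N: "\<And>i. i < n \<Longrightarrow> N i \<subseteq> {..<i}"
  shows "det (1\<^sub>m n - nngp_B n S N) = 1"
proof -
  have entry: "(1\<^sub>m n - nngp_B n S N) $$ (i, j) = (if i = j then 1 else 0)" if "i < n" "j < n" "i \<le> j" for i j
    using that N[of i] by (auto simp: one_minus_nngp_B_index kriging_residual_def kriging_coeff_def)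
  have "det (1\<^sub>m n - nngp_B n S N) = prod_list (diag_mat (1\<^sub>m n - nngp_B n S N))"
    by (rule det_lower_triangular[of n]) (auto simp: entry one_minus_nngp_B_carrier)
  also have "\<dots> = (\<Prod>i = 0..<n. (1\<^sub>m n - nngp_B n S N) $$ (i, i))"
    by (simp add: prod_list_diag_prod nngp_B_def)
  also have "\<dots> = 1"
    by (intro prod.neutral) (simp add: entry)
  finally show ?thesis .
qed

lemma nngp_F_eq_mat_diag: "nngp_F n S N = mat_diag n (\<lambda>i. residual_var S (N i) i)"
  by (rule eq_matI) (auto simp: nngp_F_def mat_diag_def residual_var_def)

lemma nngp_Q_mat_diag:
  assumes F: "\<And>i. i < n \<Longrightarrow> residual_var S (N i) i \<noteq> 0"
  shows "nngp_Q n S N = transpose_mat (1\<^sub>m n - nngp_B n S N)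
    * mat_diag n (\<lambda>i. 1 / residual_var S (N i) i) * (1\<^sub>m n - nngp_B n S N)"
proof -
  have "mat_diag n (\<lambda>i. residual_var S (N i) i) * mat_diag n (\<lambda>i. 1 / residual_var S (N i) i) = 1\<^sub>m n"
    unfolding mat_diag_diag using F by (intro eq_matI) (auto simp: mat_diag_def)
  then have "minv (nngp_F n S N) = mat_diag n (\<lambda>i. 1 / residual_var S (N i) i)"
    unfolding nngp_F_eq_mat_diag by (intro minv_eqI) auto
  then show ?thesis by (simp add: nngp_Q_def)
qed

lemma pos_def_det_pos:
  assumes pd: "pos_def_mat n S" and R: "R \<in> carrier_mat n n" "R * transpose_mat R = S"
  shows "det S > 0"
proof -
  have RT: "transpose_mat R \<in> carrier_mat n n" using R(1) by simp
  have "det S = (det R)\<^sup>2"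
    using det_mult[OF R(1) RT] det_transpose[OF R(1)] R(2) by (simp add: power2_eq_square)
  then show ?thesis using pos_def_det_nonzero[OF pd] by simp
qed

lemma mat_trace_nngp_E:
  assumes pd: "pos_def_mat n S" and R: "R \<in> carrier_mat n n" "R * transpose_mat R = S"
    and N: "\<And>i. i < n \<Longrightarrow> N i \<subseteq> {..<i}"
  shows "mat_trace (transpose_mat R * nngp_Q n S N * R) = real n"
proof -
  define A where "A = 1\<^sub>m n - nngp_B n S N"
  define D where "D = mat_diag n (\<lambda>i. 1 / residual_var S (N i) i)"
  have S: "S \<in> carrier_mat n n" using pd by (simp add: pos_def_mat_def)
  have A: "A \<in> carrier_mat n n" unfolding A_def by (rule one_minus_nngp_B_carrier)
  have AT: "transpose_mat A \<in> carrier_mat n n" using A by simp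
  have D: "D \<in> carrier_mat n n" unfolding D_def by (rule mat_diag_dim)
  have RT: "transpose_mat R \<in> carrier_mat n n" using R(1) by simp
  have F_pos: "residual_var S (N i) i > 0" if "i < n" for i
    using residual_var_pos[OF pd N[OF that] that] .
  have Q: "nngp_Q n S N = transpose_mat A * D * A"
    unfolding A_def D_def using F_pos by (intro nngp_Q_mat_diag) (metis less_irrefl)
  have Qc: "nngp_Q n S N \<in> carrier_mat n n" using Q A D by simp
  have "mat_trace (transpose_mat R * nngp_Q n S N * R) = mat_trace (R * (transpose_mat R * nngp_Q n S N))"
    using R(1) Qc by (intro mat_trace_mult_comm) auto
  also have "R * (transpose_mat R * nngp_Q n S N) = (R * transpose_mat R) * nngp_Q n S N"
    by (rule assoc_mult_mat[OF R(1) RT Qc, symmetric])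
  also have "\<dots> = S * (transpose_mat A * D * A)" using R(2) Q by simp
  also have "\<dots> = (S * transpose_mat A * D) * A"
    by (simp only: assoc_mult_mat[OF S AT D] assoc_mult_mat[OF S mult_carrier_mat[OF AT D] A])
  also have "mat_trace \<dots> = mat_trace (A * (S * transpose_mat A * D))"
    using S A D by (intro mat_trace_mult_comm) auto
  also have "A * (S * transpose_mat A * D) = (A * S * transpose_mat A) * D"
    by (simp only: assoc_mult_mat[OF A S AT] assoc_mult_mat[OF A mult_carrier_mat[OF S AT] D])
  also have "mat_trace \<dots> = (\<Sum>p<n. (A * S * transpose_mat A) $$ (p, p) * (1 / residual_var S (N p) p))"
    using S A by (simp add: D_def mat_diag_mult_right[of _ n n] mat_trace_def)
  also have "\<dots> = (\<Sum>p<n. 1)"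
  proof (rule sum.cong[OF refl])
    fix p assume "p \<in> {..<n}"
    then have p: "p < n" by simp
    have "(A * S * transpose_mat A) $$ (p, p) = quad_form n S (kriging_residual S (N p) p)"
      unfolding index_mult_transpose_quad_form[OF A S p]
      by (rule quad_form_cong) (simp add: A_def one_minus_nngp_B_index p)
    then show "(A * S * transpose_mat A) $$ (p, p) * (1 / residual_var S (N p) p) = 1"
      using quad_form_kriging_residual[OF pd N[OF p] p] F_pos[OF p] by simp
  qed
  finally show ?thesis by simp
qed

lemma det_nngp_E:
  assumes pd: "pos_def_mat n S" and R: "R \<in> carrier_mat n n" "R * transpose_mat R = S"
    and N: "\<And>i. i < n \<Longrightarrow> N i \<subseteq> {..<i}"
  shows "det (transpose_mat R * nngp_Q n S N * R) = det S * (\<Prod>i<n. 1 / residual_var S (N i) i)"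
proof -
  define A where "A = 1\<^sub>m n - nngp_B n S N"
  define D where "D = mat_diag n (\<lambda>i. 1 / residual_var S (N i) i)"
  have A: "A \<in> carrier_mat n n" unfolding A_def by (rule one_minus_nngp_B_carrier)
  have AT: "transpose_mat A \<in> carrier_mat n n" using A by simp
  have D: "D \<in> carrier_mat n n" unfolding D_def by (rule mat_diag_dim)
  have RT: "transpose_mat R \<in> carrier_mat n n" using R(1) by simp
  have Q: "nngp_Q n S N = transpose_mat A * D * A"
    unfolding A_def D_def using residual_var_pos[OF pd N] by (intro nngp_Q_mat_diag) (metis less_irrefl)
  have Qc: "nngp_Q n S N \<in> carrier_mat n n" using Q A D by simp
  have "det (nngp_Q n S N) = det D"
    using det_mult[OF mult_carrier_mat[OF AT D] A] det_mult[OF AT D] det_transpose[OF A]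
      det_one_minus_nngp_B[OF N] by (simp add: Q A_def)
  moreover have "det (transpose_mat R * nngp_Q n S N * R) = det (nngp_Q n S N) * det S"
    using det_mult[OF mult_carrier_mat[OF RT Qc] R(1)] det_mult[OF RT Qc] det_mult[OF R(1) RT]
      R(2) det_transpose[OF R(1)] by simp
  ultimately show ?thesis by (simp add: D_def det_mat_diag)
qed

lemma KLD_I_nngp_E:
  assumes pd: "pos_def_mat n S" and R: "R \<in> carrier_mat n n" "R * transpose_mat R = S"
    and N: "\<And>i. i < n \<Longrightarrow> N i \<subseteq> {..<i}"
  shows "KLD_I (transpose_mat R * nngp_Q n S N * R)
    = real n - ln (det S) + (\<Sum>i<n. ln (residual_var S (N i) i))"
proof -
  have F_pos: "residual_var S (N i) i > 0" if "i < n" for i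
    using residual_var_pos[OF pd N[OF that] that] .
  have "ln (\<Prod>i<n. 1 / residual_var S (N i) i) = (\<Sum>i<n. ln (1 / residual_var S (N i) i))"
    by (intro ln_prod) (simp_all add: F_pos[THEN less_imp_neq, THEN not_sym])
  also have "\<dots> = - (\<Sum>i<n. ln (residual_var S (N i) i))"
    by (simp add: ln_inverse[unfolded inverse_eq_divide] sum_negf)
  finally have ln_prod_F: "ln (\<Prod>i<n. 1 / residual_var S (N i) i) = - (\<Sum>i<n. ln (residual_var S (N i) i))" .
  moreover have "(\<Prod>i<n. 1 / residual_var S (N i) i) > 0" by (rule prod_pos) (simp add: F_pos)
  ultimately show ?thesis
    using pos_def_det_pos[OF pd R]
    by (simp add: KLD_I_def mat_trace_nngp_E[OF pd R N] det_nngp_E[OF pd R N] ln_mult_pos)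
qed

theorem propositionS2:
  fixes n :: nat
    and Sigma R :: "real mat"
    and s :: "nat \<Rightarrow> 'a::metric_space"
    and N :: "nat \<Rightarrow> nat \<Rightarrow> nat set"
  assumes pd: "pos_def_mat n Sigma"
    and R: "R \<in> carrier_mat n n" "R * transpose_mat R = Sigma"
    and nbr: "\<And>m i. i < n \<Longrightarrow> nearest_prev_neighbors s m i (N m i)"
    and nested: "\<And>m i. i < n \<Longrightarrow> N m i \<subseteq> N (Suc m) i"
  shows "KLD_I (transpose_mat R * nngp_Q n Sigma (N (Suc m)) * R)
           \<le> KLD_I (transpose_mat R * nngp_Q n Sigma (N m) * R)"
proof -
  \<comment> \<open>Of the nearest-neighbour property only N m i \<subseteq> {0..<i} is needed; nesting does the rest.\<close>
  have prev: "N k i \<subseteq> {..<i}" if "i < n" for k i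
    using nbr[OF that, of k] by (auto simp: nearest_prev_neighbors_def)
  have KLD: "KLD_I (transpose_mat R * nngp_Q n Sigma (N k) * R)
      = real n - ln (det Sigma) + (\<Sum>i<n. ln (residual_var Sigma (N k i) i))" for k
    using KLD_I_nngp_E[OF pd R, of "N k"] prev by blast
  have "(\<Sum>i<n. ln (residual_var Sigma (N (Suc m) i) i)) \<le> (\<Sum>i<n. ln (residual_var Sigma (N m i) i))"
  proof (rule sum_mono)
    fix i assume "i \<in> {..<n}"
    then have i: "i < n" by simp
    show "ln (residual_var Sigma (N (Suc m) i) i) \<le> ln (residual_var Sigma (N m i) i)"
      using residual_var_pos[OF pd prev i] residual_var_antimono[OF pd nested prev i] i by simp
  qed
  then show ?thesis unfolding KLD by simp
qed

end
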